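(* Let $n\ge2$. As real vector spaces, $J\mathcal{E}=\mathcal{N}_0\oplus J\mathcal{P}$.
   Context: Realize the unit sphere $S^{2n-1}$ near the point $e_0$ in Siegel form: coordinates $(w',w_n)\in\mathbb{C}^{n-1}\times\mathbb{C}$, the sphere is $2\operatorname{Re}w_n=|w'|^2$, $e_0=0$, and $(w',v)$ with $v=\operatorname{Im}w_n$ are local coordinates on it. $J\mathcal{E}$ is the space of $\infty$-jets at $e_0$ of real smooth functions, i.e. real formal power series in $(w',\bar w',v)$. $J\mathcal{P}\subset J\mathcal{E}$ is the subspace of jets of CR pluriharmonic functions, i.e. formal series of the form $\operatorname{Re}\sum_{\alpha\in\mathbb{N}^{n-1},\,l\ge0}A^l_\alpha\,{w'}^\alpha(|w'|^2+2iv)^l$ with $A^l_\alpha\in\mathbb{C}$. Write $f\in J\mathcal{E}$ as $f=\sum_{p,q\ge0}A_{p,q}(v)$ with $A_{p,q}(v)=\sum_{|\alpha|=p,|\beta|=q,l\ge0}A^l_{\alpha\bar\beta}{w'}^\alpha\bar w'^\beta v^l$. Let $\Delta'=\sum_{j=1}^{n-1}\partial_{w_j}\partial_{\bar w_j}$. $\mathcal{N}_0\subset J\mathcal{E}$ is the subspace defined by $A_{p,q}=0$ whenever $\min(p,q)=0$, and $\Delta'A_{1,1}=0$. *)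

theory Defs
  imports "HOL-Analysis.Analysis"
begin

text \<open>
  A jet (formal power series in w', conj w', v) is represented by its coefficient
  function: f a b l is the coefficient of w'^a (conj w')^b v^l, where the multi-indices
  a, b :: nat => nat are supported in the index set {..< n-1} (coordinates w_0..w_(n-2)).
\<close>

type_synonym jet = "(nat \<Rightarrow> nat) \<Rightarrow> (nat \<Rightarrow> nat) \<Rightarrow> nat \<Rightarrow> complex"

definition vidx :: "nat \<Rightarrow> (nat \<Rightarrow> nat) \<Rightarrow> bool" where
  "vidx n a \<longleftrightarrow> (\<forall>i. n - 1 \<le> i \<longrightarrow> a i = 0)"

definition jzero :: jet where
  "jzero = (\<lambda>a b l. 0)"

definition jadd :: "jet \<Rightarrow> jet \<Rightarrow> jet" where
  "jadd f g = (\<lambda>a b l. f a b l + g a b l)"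

definition jscale :: "complex \<Rightarrow> jet \<Rightarrow> jet" where
  "jscale c f = (\<lambda>a b l. c * f a b l)"

text \<open>Real jets: real-valued formal series, i.e. conjugate-symmetric coefficients.\<close>
definition JE :: "nat \<Rightarrow> jet set" where
  "JE n = {f. (\<forall>a b l. f a b l \<noteq> 0 \<longrightarrow> vidx n a \<and> vidx n b)
             \<and> (\<forall>a b l. f b a l = cnj (f a b l))}"

definition jmono :: "(nat \<Rightarrow> nat) \<Rightarrow> (nat \<Rightarrow> nat) \<Rightarrow> nat \<Rightarrow> jet" where
  "jmono a0 b0 l0 = (\<lambda>a b l. if a = a0 \<and> b = b0 \<and> l = l0 then 1 else 0)"

definition jmul :: "jet \<Rightarrow> jet \<Rightarrow> jet" where
  "jmul f g = (\<lambda>a b l. \<Sum>a1\<in>{a1. a1 \<le> a}. \<Sum>b1\<in>{b1. b1 \<le> b}. \<Sum>l1\<le>l.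
       f a1 b1 l1 * g (\<lambda>i. a i - a1 i) (\<lambda>i. b i - b1 i) (l - l1))"

primrec jpow :: "jet \<Rightarrow> nat \<Rightarrow> jet" where
  "jpow f 0 = jmono (\<lambda>_. 0) (\<lambda>_. 0) 0"
| "jpow f (Suc k) = jmul f (jpow f k)"

definition unitidx :: "nat \<Rightarrow> nat \<Rightarrow> nat" where
  "unitidx j = (\<lambda>i. if i = j then 1 else 0)"

definition sqnorm :: "nat \<Rightarrow> jet" where
  "sqnorm n = (\<lambda>a b l. \<Sum>j<n - 1. jmono (unitidx j) (unitidx j) 0 a b l)"

definition hterm :: "nat \<Rightarrow> (nat \<Rightarrow> nat) \<Rightarrow> nat \<Rightarrow> jet" where
  "hterm n \<alpha> k = jmul (jmono \<alpha> (\<lambda>_. 0) 0)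
      (jpow (jadd (sqnorm n) (jscale (2 * \<i>) (jmono (\<lambda>_. 0) (\<lambda>_. 0) 1))) k)"

text \<open>Formal sum  sum_{alpha,k} A^k_alpha w'^alpha (|w'|^2+2iv)^k, taken coefficientwise
  (for each monomial only finitely many terms contribute).\<close>
definition hser :: "nat \<Rightarrow> ((nat \<Rightarrow> nat) \<Rightarrow> nat \<Rightarrow> complex) \<Rightarrow> jet" where
  "hser n A = (\<lambda>a b l. \<Sum>\<^sub>\<infinity>(\<alpha>, k)\<in>{(\<alpha>, k). vidx n \<alpha>}. A \<alpha> k * hterm n \<alpha> k a b l)"

text \<open>Real part of a formal series (v is real, conj exchanges w' and conj w').\<close>
definition jRe :: "jet \<Rightarrow> jet" where
  "jRe g = (\<lambda>a b l. (g a b l + cnj (g b a l)) / 2)"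

definition JP :: "nat \<Rightarrow> jet set" where
  "JP n = {jRe (hser n A) | A. True}"

definition jpart :: "nat \<Rightarrow> nat \<Rightarrow> nat \<Rightarrow> jet \<Rightarrow> jet" where
  "jpart n p q f = (\<lambda>a b l. if sum a {..<n - 1} = p \<and> sum b {..<n - 1} = q then f a b l else 0)"

definition dw :: "nat \<Rightarrow> jet \<Rightarrow> jet" where
  "dw j f = (\<lambda>a b l. of_nat (a j + 1) * f (a(j := a j + 1)) b l)"

definition dwb :: "nat \<Rightarrow> jet \<Rightarrow> jet" where
  "dwb j f = (\<lambda>a b l. of_nat (b j + 1) * f a (b(j := b j + 1)) l)"

definition lap' :: "nat \<Rightarrow> jet \<Rightarrow> jet" where
  "lap' n f = (\<lambda>a b l. \<Sum>j<n - 1. dw j (dwb j f) a b l)"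

definition N0 :: "nat \<Rightarrow> jet set" where
  "N0 n = {f \<in> JE n. (\<forall>p q. min p q = 0 \<longrightarrow> jpart n p q f = jzero)
                    \<and> lap' n (jpart n 1 1 f) = jzero}"

definition real_subspace :: "jet set \<Rightarrow> bool" where
  "real_subspace S \<longleftrightarrow> jzero \<in> S \<and> (\<forall>f\<in>S. \<forall>g\<in>S. jadd f g \<in> S)
      \<and> (\<forall>c::real. \<forall>f\<in>S. jscale (complex_of_real c) f \<in> S)"

end

theory Submission
  imports Defs
begin

text \<open>
  Modulo \<open>\<N>\<^sub>0\<close>, a real jet \<open>f\<close> is determined by its pure coefficients \<open>f(a, 0, l)\<close>
  (those of \<open>w'\<^sup>a v\<^sup>l\<close>; the \<open>f(0, b, l)\<close> are their conjugates) and by the real traces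
  \<open>t\<^sub>l = \<Sum>\<^sub>j f(e\<^sub>j, e\<^sub>j, l)\<close>, which encode \<open>\<Delta>'A\<^sub>1\<^sub>,\<^sub>1\<close>. For \<open>h = Re \<Sum> A\<^sup>k\<^sub>\<alpha> w'\<^sup>\<alpha> (2 w\<^sub>n)\<^sup>k\<close>
  the coefficient of \<open>w'\<^sup>\<alpha> v\<^sup>l\<close> is \<open>A\<^sup>l\<^sub>\<alpha> (2i)\<^sup>l / 2\<close> for \<open>\<alpha> \<noteq> 0\<close> and \<open>Re (A\<^sup>l\<^sub>0 (2i)\<^sup>l)\<close> for
  \<open>\<alpha> = 0\<close>, while \<open>t\<^sub>l = (n - 1) (l + 1) Re (A\<^sup>l\<^sup>+\<^sup>1\<^sub>0 (2i)\<^sup>l)\<close>. Since \<open>n \<ge> 2\<close>, \<open>A\<close> can be chosen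
  to match these data of any \<open>f\<close>, and then \<open>f - h \<in> \<N>\<^sub>0\<close>. If they all vanish, then
  \<open>A\<^sup>k\<^sub>\<alpha> = 0\<close> for \<open>\<alpha> \<noteq> 0\<close>, and \<open>z = A\<^sup>l\<^sup>+\<^sup>1\<^sub>0 (2i)\<^sup>l\<close> has \<open>Re z = Re (2i z) = 0\<close>, so \<open>z = 0\<close>;
  only an imaginary \<open>A\<^sup>0\<^sub>0\<close> survives, whence \<open>h = 0\<close> and \<open>\<N>\<^sub>0 \<inter> J\<P> = 0\<close>.
\<close>

lemma vidx_zero [simp]: "vidx n (\<lambda>_. 0)"
  unfolding vidx_def by simp

lemma vidx_sum_eq_0: "vidx n a \<Longrightarrow> sum a {..<n - 1} = 0 \<Longrightarrow> a = (\<lambda>_. 0)"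
  unfolding vidx_def by (auto simp: fun_eq_iff) (metis lessThan_iff not_le)

lemma vidx_unitidx: "j < n - 1 \<Longrightarrow> vidx n (unitidx j)"
  unfolding vidx_def unitidx_def by auto

lemma sum_unitidx: "j < m \<Longrightarrow> sum (unitidx j) {..<m} = 1"
  unfolding unitidx_def by simp

lemma unitidx_le_iff: "unitidx i \<le> unitidx j \<longleftrightarrow> i = j"
  unfolding unitidx_def le_fun_def by (metis le_zero_eq one_neq_zero order_refl)

lemma unitidx_not_le_zero [simp]: "\<not> unitidx j \<le> (\<lambda>_. 0)"
  unfolding unitidx_def le_fun_def by (metis le_zero_eq one_neq_zero)

lemma unitidx_neq_zero: "unitidx j \<noteq> (\<lambda>_. 0)"
  by (metis unitidx_not_le_zero order_refl)

lemma upd_zero_eq_unitidx: "(\<lambda>_. 0::nat)(j := Suc 0) = unitidx j"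
  unfolding unitidx_def by auto

lemma finite_le_vidx:
  assumes "vidx n a"
  shows "finite {a1. a1 \<le> a}"
proof (rule finite_subset)
  let ?I = "{..<n - 1}" and ?B = "{..sum a {..<n - 1}}"
  show "{a1. a1 \<le> a} \<subseteq> {f. \<forall>i. (i \<in> ?I \<longrightarrow> f i \<in> ?B) \<and> (i \<notin> ?I \<longrightarrow> f i = 0)}"
  proof (intro subsetI CollectI allI conjI impI)
    fix f i assume "f \<in> {a1. a1 \<le> a}"
    then have "f i \<le> a i" by (simp add: le_fun_def)
    moreover have "a i \<le> sum a ?I" if "i \<in> ?I" using that by (intro member_le_sum) auto
    moreover have "a i = 0" if "i \<notin> ?I" using assms that by (simp add: vidx_def)
    ultimately show "i \<in> ?I \<Longrightarrow> f i \<in> ?B" "i \<notin> ?I \<Longrightarrow> f i = 0" by auto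
  qed
  show "finite {f. \<forall>i. (i \<in> ?I \<longrightarrow> f i \<in> ?B) \<and> (i \<notin> ?I \<longrightarrow> f i = 0)}"
    by (rule finite_set_of_finite_funs) auto
qed

lemma jmul_nonzeroE:
  assumes "jmul f g a b l \<noteq> 0"
  obtains a1 b1 l1 where "a1 \<le> a" "b1 \<le> b" "l1 \<le> l" "f a1 b1 l1 \<noteq> 0"
    "g (\<lambda>i. a i - a1 i) (\<lambda>i. b i - b1 i) (l - l1) \<noteq> 0"
proof -
  have "jmul f g a b l = 0" if "\<not> (\<exists>a1 b1 l1. a1 \<le> a \<and> b1 \<le> b \<and> l1 \<le> l \<and> f a1 b1 l1 \<noteq> 0 \<and>
      g (\<lambda>i. a i - a1 i) (\<lambda>i. b i - b1 i) (l - l1) \<noteq> 0)"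
    using that unfolding jmul_def by (auto intro!: sum.neutral)
  with assms that show thesis by blast
qed

lemma jmul_jmono_left:
  assumes "finite {a1. a1 \<le> a}" "finite {b1. b1 \<le> b}"
  shows "jmul (jmono \<alpha> \<beta> m) g a b l =
    (if \<alpha> \<le> a \<and> \<beta> \<le> b \<and> m \<le> l then g (\<lambda>i. a i - \<alpha> i) (\<lambda>i. b i - \<beta> i) (l - m) else 0)"
proof -
  let ?G = "\<lambda>(a1, b1, l1). g (\<lambda>i. a i - a1 i) (\<lambda>i. b i - b1 i) (l - l1)"
  have "jmul (jmono \<alpha> \<beta> m) g a b l
      = (\<Sum>p \<in> {a1. a1 \<le> a} \<times> {b1. b1 \<le> b} \<times> {..l}. if p = (\<alpha>, \<beta>, m) then ?G p else 0)"
    unfolding jmul_def jmono_def sum.cartesian_product by (intro sum.cong) (auto split: if_splits)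
  with assms show ?thesis by simp
qed

lemma jmul_jadd_left: "jmul (jadd f g) h = jadd (jmul f h) (jmul g h)"
  unfolding jmul_def jadd_def by (simp add: distrib_right sum.distrib)

lemma jmul_jscale_left: "jmul (jscale c f) h = jscale c (jmul f h)"
  unfolding jmul_def jscale_def by (simp add: sum_distrib_left mult.assoc)

lemma jmul_sum_left:
  "finite J \<Longrightarrow> jmul (\<lambda>a b l. \<Sum>j\<in>J. F j a b l) h a b l = (\<Sum>j\<in>J. jmul (F j) h a b l)"
proof (induction J rule: finite_induct)
  case empty
  then show ?case by (simp add: jmul_def)
next
  case (insert x J)
  then have "(\<lambda>a b l. \<Sum>j\<in>insert x J. F j a b l) = jadd (F x) (\<lambda>a b l. \<Sum>j\<in>J. F j a b l)"
    by (simp add: jadd_def)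
  with insert show ?case
    using jmul_jadd_left[of "F x" "\<lambda>a b l. \<Sum>j\<in>J. F j a b l"] by (simp add: jadd_def)
qed

lemma jRe_jadd: "jRe (jadd f g) = jadd (jRe f) (jRe g)"
  unfolding jRe_def jadd_def by (simp add: fun_eq_iff field_simps)

lemma jRe_jscale_of_real: "jRe (jscale (of_real c) f) = jscale (of_real c) (jRe f)"
  unfolding jRe_def jscale_def by (simp add: algebra_simps)

lemma jRe_jzero: "jRe jzero = jzero"
  unfolding jRe_def jzero_def by simp

lemma jRe_cnj: "jRe g b a l = cnj (jRe g a b l)"
  by (simp add: jRe_def add.commute)

lemma jRe_diag: "jRe g a a l = of_real (Re (g a a l))"
  by (simp add: jRe_def complex_add_cnj)

lemma JE_cnj: "f \<in> JE n \<Longrightarrow> f b a l = cnj (f a b l)"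
  unfolding JE_def by blast

lemma JE_vidx: "f \<in> JE n \<Longrightarrow> f a b l \<noteq> 0 \<Longrightarrow> vidx n a \<and> vidx n b"
  unfolding JE_def by blast

lemma JE_diag_real: "f \<in> JE n \<Longrightarrow> f a a l = of_real (Re (f a a l))"
  using JE_cnj[of f n a a l] by (simp add: complex_eq_iff)

lemma JE_real_subspace: "real_subspace (JE n)"
  unfolding real_subspace_def
proof (intro conjI ballI allI)
  show "jzero \<in> JE n" unfolding JE_def jzero_def by simp
  fix f g assume f: "f \<in> JE n" and g: "g \<in> JE n"
  have "vidx n a \<and> vidx n b" if "f a b l + g a b l \<noteq> 0" for a b l
    using that JE_vidx[OF f, of a b l] JE_vidx[OF g, of a b l] by (cases "f a b l = 0") auto
  moreover have "f b a l + g b a l = cnj (f a b l + g a b l)" for a b l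
    by (simp add: JE_cnj[OF f, of a b l] JE_cnj[OF g, of a b l])
  ultimately show "jadd f g \<in> JE n" unfolding JE_def jadd_def by blast
next
  fix c :: real and f assume f: "f \<in> JE n"
  have "vidx n a \<and> vidx n b" if "of_real c * f a b l \<noteq> 0" for a b l
    using that JE_vidx[OF f, of a b l] by simp
  moreover have "of_real c * f b a l = cnj (of_real c * f a b l)" for a b l
    by (simp add: JE_cnj[OF f, of a b l])
  ultimately show "jscale (of_real c) f \<in> JE n" unfolding JE_def jscale_def by blast
qed

lemma real_subspace_diff: "real_subspace S \<Longrightarrow> f \<in> S \<Longrightarrow> g \<in> S \<Longrightarrow> jadd f (jscale (-1) g) \<in> S"
  unfolding real_subspace_def by (metis of_real_1 of_real_minus)

lemma real_subspace_decomposition_unique: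
  assumes "real_subspace S" "real_subspace T" "\<And>f. f \<in> S \<Longrightarrow> f \<in> T \<Longrightarrow> f = jzero"
    and "g1 \<in> S" "g2 \<in> S" "h1 \<in> T" "h2 \<in> T" "jadd g1 h1 = jadd g2 h2"
  shows "g1 = g2 \<and> h1 = h2"
proof -
  have "g1 a b l + h1 a b l = g2 a b l + h2 a b l" for a b l
    using fun_cong[OF fun_cong[OF fun_cong[OF assms(8)]]] by (simp add: jadd_def)
  then have "jadd g1 (jscale (-1) g2) = jadd h2 (jscale (-1) h1)"
    unfolding jadd_def jscale_def fun_eq_iff by (simp add: algebra_simps diff_eq_eq eq_diff_eq)
  moreover have "jadd g1 (jscale (-1) g2) \<in> S" "jadd h2 (jscale (-1) h1) \<in> T"
    using assms real_subspace_diff by blast+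
  ultimately have "jadd g1 (jscale (-1) g2) = jzero" using assms(3) by metis
  with \<open>jadd g1 (jscale (-1) g2) = jadd h2 (jscale (-1) h1)\<close> show ?thesis
    by (simp add: jadd_def jscale_def jzero_def fun_eq_iff)
qed

text \<open>On the sphere \<open>2 Re w\<^sub>n = |w'|\<^sup>2\<close>, so \<open>|w'|\<^sup>2 + 2 i v = 2 w\<^sub>n\<close> and \<open>hterm n \<alpha> k\<close>
  is \<open>w'\<^sup>\<alpha> (2 w\<^sub>n)\<^sup>k\<close>.\<close>

definition two_wn :: "nat \<Rightarrow> jet" where
  "two_wn n = jadd (sqnorm n) (jscale (2 * \<i>) (jmono (\<lambda>_. 0) (\<lambda>_. 0) 1))"

lemma hterm_eq_jmul_jpow: "hterm n \<alpha> k = jmul (jmono \<alpha> (\<lambda>_. 0) 0) (jpow (two_wn n) k)"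
  unfolding hterm_def two_wn_def ..

lemma two_wn_nonzero:
  assumes "two_wn n a b l \<noteq> 0"
  shows "a = b \<and> vidx n a \<and> sum a {..<n - 1} + l = 1"
proof (cases "sqnorm n a b l = 0")
  case True
  with assms have "jmono (\<lambda>_. 0) (\<lambda>_. 0) 1 a b l \<noteq> 0"
    unfolding two_wn_def jadd_def jscale_def by auto
  then show ?thesis unfolding jmono_def by (auto split: if_splits)
next
  case False
  then obtain j where "j < n - 1" "jmono (unitidx j) (unitidx j) 0 a b l \<noteq> 0"
    unfolding sqnorm_def by (meson lessThan_iff sum.not_neutral_contains_not_neutral)
  then show ?thesis unfolding jmono_def by (auto simp: vidx_unitidx sum_unitidx split: if_splits)
qed

lemma jpow_two_wn_nonzero:
  "jpow (two_wn n) k a b l \<noteq> 0 \<Longrightarrow> a = b \<and> vidx n a \<and> sum a {..<n - 1} + l = k"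
proof (induction k arbitrary: a b l)
  case 0
  then show ?case by (auto simp: jmono_def split: if_splits)
next
  case (Suc k)
  then have "jmul (two_wn n) (jpow (two_wn n) k) a b l \<noteq> 0" by simp
  then obtain a1 b1 l1 where le: "a1 \<le> a" "b1 \<le> b" "l1 \<le> l" and "two_wn n a1 b1 l1 \<noteq> 0"
    and "jpow (two_wn n) k (\<lambda>i. a i - a1 i) (\<lambda>i. b i - b1 i) (l - l1) \<noteq> 0"
    by (rule jmul_nonzeroE)
  with Suc.IH two_wn_nonzero have u: "a1 = b1 \<and> vidx n a1 \<and> sum a1 {..<n - 1} + l1 = 1"
    and p: "(\<lambda>i. a i - a1 i) = (\<lambda>i. b i - b1 i) \<and> vidx n (\<lambda>i. a i - a1 i)
      \<and> sum (\<lambda>i. a i - a1 i) {..<n - 1} + (l - l1) = k"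
    by blast+
  have a: "a = (\<lambda>i. a1 i + (a i - a1 i))" and b: "b = (\<lambda>i. b1 i + (b i - b1 i))"
    using le by (auto simp: le_fun_def)
  have sum_a: "sum a {..<n - 1} = sum a1 {..<n - 1} + sum (\<lambda>i. a i - a1 i) {..<n - 1}"
    by (subst a) (simp add: sum.distrib)
  have "a = b" using u p by (subst a, subst b) (simp add: fun_eq_iff)
  moreover have "vidx n a" using u p by (subst a) (auto simp: vidx_def)
  moreover have "sum a {..<n - 1} + l = Suc k" using sum_a u p le(3) by linarith
  ultimately show ?case by blast
qed

lemma jpow_two_wn_Suc:
  assumes "vidx n a" "vidx n b"
  shows "jpow (two_wn n) (Suc k) a b l =
      (\<Sum>j<n - 1. if unitidx j \<le> a \<and> unitidx j \<le> b
        then jpow (two_wn n) k (\<lambda>i. a i - unitidx j i) (\<lambda>i. b i - unitidx j i) l else 0)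
      + 2 * \<i> * (if 1 \<le> l then jpow (two_wn n) k a b (l - 1) else 0)"
proof -
  have fin: "finite {a1. a1 \<le> a}" "finite {b1. b1 \<le> b}"
    using assms finite_le_vidx by auto
  have "jpow (two_wn n) (Suc k) a b l = jmul (sqnorm n) (jpow (two_wn n) k) a b l
      + 2 * \<i> * jmul (jmono (\<lambda>_. 0) (\<lambda>_. 0) 1) (jpow (two_wn n) k) a b l"
    unfolding two_wn_def jpow.simps jmul_jadd_left jmul_jscale_left by (simp add: jadd_def jscale_def)
  also have "jmul (sqnorm n) (jpow (two_wn n) k) a b l
      = (\<Sum>j<n - 1. jmul (jmono (unitidx j) (unitidx j) 0) (jpow (two_wn n) k) a b l)"
    unfolding sqnorm_def by (rule jmul_sum_left) simp
  finally show ?thesis using fin by (simp add: jmul_jmono_left le_fun_def cong: if_cong)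
qed

lemma jpow_two_wn_zero_zero:
  "jpow (two_wn n) k (\<lambda>_. 0) (\<lambda>_. 0) l = (if k = l then (2 * \<i>) ^ l else 0)"
proof (induction k arbitrary: l)
  case 0
  then show ?case by (simp add: jmono_def)
next
  case (Suc k)
  then show ?case by (cases l) (simp_all add: jpow_two_wn_Suc del: jpow.simps)
qed

lemma jpow_two_wn_unitidx:
  assumes "j < n - 1"
  shows "jpow (two_wn n) k (unitidx j) (unitidx j) l
    = (if k = Suc l then of_nat k * (2 * \<i>) ^ l else 0)"
proof (induction k arbitrary: l)
  case 0
  then show ?case by (simp add: jmono_def unitidx_neq_zero)
next
  case (Suc k)
  have "jpow (two_wn n) (Suc k) (unitidx j) (unitidx j) l = jpow (two_wn n) k (\<lambda>_. 0) (\<lambda>_. 0) l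
      + 2 * \<i> * (if 1 \<le> l then jpow (two_wn n) k (unitidx j) (unitidx j) (l - 1) else 0)"
    using assms by (simp add: jpow_two_wn_Suc vidx_unitidx unitidx_le_iff del: jpow.simps)
  with Suc.IH show ?case
    by (cases l) (auto simp: jpow_two_wn_zero_zero algebra_simps)
qed

lemma hterm_eq:
  assumes "vidx n a" "vidx n b"
  shows "hterm n \<alpha> k a b l = (if \<alpha> \<le> a then jpow (two_wn n) k (\<lambda>i. a i - \<alpha> i) b l else 0)"
  using assms finite_le_vidx[OF assms(1)] finite_le_vidx[OF assms(2)]
  by (simp add: hterm_eq_jmul_jpow jmul_jmono_left le_fun_def del: jpow.simps)

lemma hterm_nonzero:
  assumes "hterm n \<alpha> k a b l \<noteq> 0"
  shows "\<alpha> \<le> a \<and> (\<lambda>i. a i - \<alpha> i) = b \<and> vidx n b \<and> sum b {..<n - 1} + l = k"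
proof -
  obtain a1 b1 l1 where "a1 \<le> a" "b1 \<le> b" "l1 \<le> l" "jmono \<alpha> (\<lambda>_. 0) 0 a1 b1 l1 \<noteq> 0"
    "jpow (two_wn n) k (\<lambda>i. a i - a1 i) (\<lambda>i. b i - b1 i) (l - l1) \<noteq> 0"
    using assms unfolding hterm_eq_jmul_jpow by (rule jmul_nonzeroE)
  moreover from this have "a1 = \<alpha>" "b1 = (\<lambda>_. 0)" "l1 = 0"
    by (auto simp: jmono_def split: if_splits)
  ultimately show ?thesis by (auto dest!: jpow_two_wn_nonzero)
qed

text \<open>The monomial \<open>w'\<^sup>a (cnj w')\<^sup>b v\<^sup>l\<close> occurs only in the term \<open>\<alpha> = a - b\<close>, \<open>k = |b| + l\<close>
  of the series, so the infinite sum reduces to that single term.\<close>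

lemma hser_eq:
  "hser n A a b l = (if vidx n (\<lambda>i. a i - b i)
    then A (\<lambda>i. a i - b i) (sum b {..<n - 1} + l) * hterm n (\<lambda>i. a i - b i) (sum b {..<n - 1} + l) a b l
    else 0)"
proof -
  define c where "c = ((\<lambda>i. a i - b i), sum b {..<n - 1} + l)"
  define F where "F = (\<lambda>(\<alpha>, k). A \<alpha> k * hterm n \<alpha> k a b l)"
  have "F x = 0" if "x \<noteq> c" for x
  proof (rule ccontr)
    obtain \<alpha> k where x: "x = (\<alpha>, k)" by (cases x)
    assume "F x \<noteq> 0"
    then have "hterm n \<alpha> k a b l \<noteq> 0" by (simp add: F_def x)
    then have "\<alpha> \<le> a \<and> (\<lambda>i. a i - \<alpha> i) = b \<and> sum b {..<n - 1} + l = k"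
      by (blast dest: hterm_nonzero)
    then have "x = c" by (auto simp: x c_def le_fun_def fun_eq_iff) (metis diff_diff_cancel)
    with that show False by simp
  qed
  then have "hser n A a b l = infsum F ({(\<alpha>, k). vidx n \<alpha>} \<inter> {c})"
    unfolding hser_def F_def by (intro infsum_cong_neutral) auto
  then show ?thesis by (auto simp: c_def F_def)
qed

lemma hser_holo_coeff: "vidx n a \<Longrightarrow> hser n A a (\<lambda>_. 0) l = A a l * (2 * \<i>) ^ l"
  by (simp add: hser_eq hterm_eq jpow_two_wn_zero_zero)

lemma hser_antiholo_coeff:
  assumes "b \<noteq> (\<lambda>_. 0)"
  shows "hser n A (\<lambda>_. 0) b l = 0"
proof -
  have "hterm n (\<lambda>_. 0) (sum b {..<n - 1} + l) (\<lambda>_. 0) b l = 0"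
    using assms hterm_nonzero by fastforce
  then show ?thesis by (simp add: hser_eq)
qed

lemma hser_unitidx_coeff:
  "j < n - 1 \<Longrightarrow> hser n A (unitidx j) (unitidx j) l = A (\<lambda>_. 0) (Suc l) * of_nat (Suc l) * (2 * \<i>) ^ l"
  by (simp add: hser_eq hterm_eq vidx_unitidx sum_unitidx jpow_two_wn_unitidx le_fun_def
      del: jpow.simps)

lemma hser_nonzero:
  assumes "hser n A a b l \<noteq> 0"
  shows "vidx n a \<and> vidx n b"
proof -
  have v: "vidx n (\<lambda>i. a i - b i)"
    and "hterm n (\<lambda>i. a i - b i) (sum b {..<n - 1} + l) a b l \<noteq> 0"
    using assms by (auto simp: hser_eq split: if_splits)
  then have "(\<lambda>i. a i - (a i - b i)) = b" "vidx n b" by (blast dest: hterm_nonzero)+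
  with v have "vidx n a" unfolding vidx_def by (metis diff_zero)
  with \<open>vidx n b\<close> show ?thesis by blast
qed

lemma hser_add: "hser n (\<lambda>\<alpha> k. A \<alpha> k + B \<alpha> k) = jadd (hser n A) (hser n B)"
  by (simp add: fun_eq_iff hser_eq jadd_def distrib_right)

lemma hser_scale: "hser n (\<lambda>\<alpha> k. c * A \<alpha> k) = jscale c (hser n A)"
  by (simp add: fun_eq_iff hser_eq jscale_def)

lemma hser_zero: "hser n (\<lambda>\<alpha> k. 0) = jzero"
  by (simp add: fun_eq_iff hser_eq jzero_def)

lemma jRe_hser_in_JE: "jRe (hser n A) \<in> JE n"
proof -
  have "vidx n a \<and> vidx n b" if "jRe (hser n A) a b l \<noteq> 0" for a b l
  proof -
    from that have "hser n A a b l \<noteq> 0 \<or> hser n A b a l \<noteq> 0" by (auto simp: jRe_def)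
    then show ?thesis using hser_nonzero by blast
  qed
  then show ?thesis unfolding JE_def using jRe_cnj by blast
qed

lemma JP_real_subspace: "real_subspace (JP n)"
  unfolding real_subspace_def JP_def
proof (intro conjI ballI allI)
  have "jzero = jRe (hser n (\<lambda>\<alpha> k. 0))" by (simp add: hser_zero jRe_jzero)
  then show "jzero \<in> {jRe (hser n A) |A. True}" by blast
  fix f g assume "f \<in> {jRe (hser n A) |A. True}" "g \<in> {jRe (hser n A) |A. True}"
  then obtain A B where "f = jRe (hser n A)" "g = jRe (hser n B)" by blast
  then have "jadd f g = jRe (hser n (\<lambda>\<alpha> k. A \<alpha> k + B \<alpha> k))" by (simp add: hser_add jRe_jadd)
  then show "jadd f g \<in> {jRe (hser n A) |A. True}" by blast
next
  fix c :: real and f assume "f \<in> {jRe (hser n A) |A. True}"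
  then obtain A where "f = jRe (hser n A)" by blast
  then have "jscale (of_real c) f = jRe (hser n (\<lambda>\<alpha> k. of_real c * A \<alpha> k))"
    by (simp add: hser_scale jRe_jscale_of_real)
  then show "jscale (of_real c) f \<in> {jRe (hser n A) |A. True}" by blast
qed

lemma jRe_hser_holo_coeff:
  "vidx n a \<Longrightarrow> a \<noteq> (\<lambda>_. 0) \<Longrightarrow> jRe (hser n A) a (\<lambda>_. 0) l = A a l * (2 * \<i>) ^ l / 2"
  by (simp add: jRe_def hser_holo_coeff hser_antiholo_coeff)

lemma jRe_hser_origin_coeff:
  "jRe (hser n A) (\<lambda>_. 0) (\<lambda>_. 0) l = of_real (Re (A (\<lambda>_. 0) l * (2 * \<i>) ^ l))"
  by (simp only: jRe_diag hser_holo_coeff vidx_zero)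

lemma jRe_hser_trace:
  "(\<Sum>j<n - 1. jRe (hser n A) (unitidx j) (unitidx j) l)
    = of_nat (n - 1) * of_real (Re (A (\<lambda>_. 0) (Suc l) * (2 * \<i>) ^ l) * real (Suc l))"
proof -
  have "jRe (hser n A) (unitidx j) (unitidx j) l
      = of_real (Re (A (\<lambda>_. 0) (Suc l) * (2 * \<i>) ^ l) * real (Suc l))" if "j < n - 1" for j
    using that by (simp add: jRe_diag hser_unitidx_coeff mult_ac del: of_nat_Suc)
  then show ?thesis by simp
qed

lemma hser_eq_const:
  assumes "\<And>\<alpha> k. vidx n \<alpha> \<Longrightarrow> (\<alpha>, k) \<noteq> ((\<lambda>_. 0), 0) \<Longrightarrow> A \<alpha> k = 0"
  shows "hser n A a b l = (if a = (\<lambda>_. 0) \<and> b = (\<lambda>_. 0) \<and> l = 0 then A (\<lambda>_. 0) 0 else 0)"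
proof (cases "a = (\<lambda>_. 0) \<and> b = (\<lambda>_. 0) \<and> l = 0")
  case True
  then show ?thesis by (simp add: hser_eq hterm_eq jpow_two_wn_zero_zero del: jpow.simps)
next
  case False
  define c where "c = (\<lambda>i. a i - b i)"
  define k where "k = sum b {..<n - 1} + l"
  have "hser n A a b l = 0"
  proof (rule ccontr)
    assume "hser n A a b l \<noteq> 0"
    then have "vidx n c" "A c k \<noteq> 0" and ht: "hterm n c k a b l \<noteq> 0"
      by (auto simp: hser_eq c_def k_def split: if_splits)
    with assms have "c = (\<lambda>_. 0)" "k = 0" by blast+
    with hterm_nonzero[OF ht] have "a = b" "vidx n b" "sum b {..<n - 1} = 0" "l = 0" by auto
    with False show False using vidx_sum_eq_0 by blast
  qed
  with False show ?thesis by auto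
qed

lemma jpart_min_eq_0_iff:
  assumes "f \<in> JE n"
  shows "(\<forall>p q. min p q = 0 \<longrightarrow> jpart n p q f = jzero) \<longleftrightarrow> (\<forall>a l. f a (\<lambda>_. 0) l = 0)"
proof
  assume H: "\<forall>p q. min p q = 0 \<longrightarrow> jpart n p q f = jzero"
  show "\<forall>a l. f a (\<lambda>_. 0) l = 0"
  proof (intro allI)
    fix a l
    have "jpart n (sum a {..<n - 1}) 0 f a (\<lambda>_. 0) l = 0" using H by (simp add: jzero_def)
    then show "f a (\<lambda>_. 0) l = 0" by (simp add: jpart_def)
  qed
next
  assume H: "\<forall>a l. f a (\<lambda>_. 0) l = 0"
  have "f a b l = 0" if "sum a {..<n - 1} = 0 \<or> sum b {..<n - 1} = 0" for a b l
  proof (rule ccontr)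
    assume "f a b l \<noteq> 0"
    with JE_vidx[OF assms] have "vidx n a" "vidx n b" by blast+
    with that have "a = (\<lambda>_. 0) \<or> b = (\<lambda>_. 0)" using vidx_sum_eq_0 by blast
    with H JE_cnj[OF assms, of b a l] \<open>f a b l \<noteq> 0\<close> show False by auto
  qed
  then show "\<forall>p q. min p q = 0 \<longrightarrow> jpart n p q f = jzero"
    by (auto simp: jpart_def jzero_def fun_eq_iff min_def)
qed

lemma upd_sum_eq_1_imp_zero:
  assumes "vidx n (a(j := a j + 1))" "j < n - 1" "sum (a(j := a j + 1)) {..<n - 1} = 1"
  shows "a = (\<lambda>_. 0)"
proof -
  have "a(j := a j + 1) = (\<lambda>i. a i + unitidx j i)"
    by (simp add: fun_eq_iff unitidx_def)
  then have "sum (a(j := a j + 1)) {..<n - 1} = sum a {..<n - 1} + 1"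
    using assms(2) by (simp only: sum.distrib sum_unitidx)
  with assms(3) have "sum a {..<n - 1} = 0" by simp
  moreover have "vidx n a"
    using assms(1,2) unfolding vidx_def by (metis fun_upd_other leD)
  ultimately show ?thesis by (metis vidx_sum_eq_0)
qed

lemma lap'_jpart_1_1:
  assumes "f \<in> JE n"
  shows "lap' n (jpart n 1 1 f) a b l =
    (if a = (\<lambda>_. 0) \<and> b = (\<lambda>_. 0) then \<Sum>j<n - 1. f (unitidx j) (unitidx j) l else 0)"
proof (cases "a = (\<lambda>_. 0) \<and> b = (\<lambda>_. 0)")
  case True
  then show ?thesis
    unfolding lap'_def dw_def dwb_def jpart_def by (simp add: upd_zero_eq_unitidx sum_unitidx)
next
  case False
  have "jpart n 1 1 f (a(j := a j + 1)) (b(j := b j + 1)) l = 0" if "j < n - 1" for j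
  proof (rule ccontr)
    assume "jpart n 1 1 f (a(j := a j + 1)) (b(j := b j + 1)) l \<noteq> 0"
    then have "sum (a(j := a j + 1)) {..<n - 1} = 1" "sum (b(j := b j + 1)) {..<n - 1} = 1"
      and "f (a(j := a j + 1)) (b(j := b j + 1)) l \<noteq> 0"
      unfolding jpart_def by (auto split: if_splits)
    with JE_vidx[OF assms] that have "a = (\<lambda>_. 0)" "b = (\<lambda>_. 0)"
      by (blast intro: upd_sum_eq_1_imp_zero)+
    with False show False by blast
  qed
  then have "lap' n (jpart n 1 1 f) a b l = 0"
    unfolding lap'_def dw_def dwb_def by (intro sum.neutral) simp
  with False show ?thesis by auto
qed

lemma N0_iff:
  "f \<in> N0 n \<longleftrightarrow> f \<in> JE n \<and> (\<forall>a l. f a (\<lambda>_. 0) l = 0)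
    \<and> (\<forall>l. (\<Sum>j<n - 1. f (unitidx j) (unitidx j) l) = 0)"
proof -
  have "lap' n (jpart n 1 1 f) = jzero \<longleftrightarrow> (\<forall>l. (\<Sum>j<n - 1. f (unitidx j) (unitidx j) l) = 0)"
    if "f \<in> JE n"
    using lap'_jpart_1_1[OF that] by (auto simp: jzero_def fun_eq_iff)
  then show ?thesis unfolding N0_def using jpart_min_eq_0_iff by blast
qed

lemma N0_real_subspace: "real_subspace (N0 n)"
  using JE_real_subspace
  by (auto simp: real_subspace_def N0_iff jzero_def jadd_def jscale_def sum.distrib
      simp flip: sum_distrib_left)

lemma N0_inter_JP:
  assumes "2 \<le> n" "f \<in> N0 n" "f \<in> JP n"
  shows "f = jzero"
proof -
  from assms(3) obtain A where f: "f = jRe (hser n A)" by (auto simp: JP_def)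
  from assms(2) have holo: "f a (\<lambda>_. 0) l = 0"
    and trace: "(\<Sum>j<n - 1. f (unitidx j) (unitidx j) l) = 0" for a l
    by (auto simp: N0_iff)
  have origin: "Re (A (\<lambda>_. 0) l * (2 * \<i>) ^ l) = 0" for l
    using holo[of "\<lambda>_. 0" l] by (simp only: f jRe_hser_origin_coeff of_real_eq_0_iff)
  have "A \<alpha> k = 0" if "vidx n \<alpha>" "(\<alpha>, k) \<noteq> ((\<lambda>_. 0), 0)" for \<alpha> k
  proof (cases "\<alpha> = (\<lambda>_. 0)")
    case False
    then show ?thesis using holo[of \<alpha> k] by (simp add: f jRe_hser_holo_coeff that(1))
  next
    case True
    with that obtain l where k: "k = Suc l" by (cases k) auto
    define z where "z = A (\<lambda>_. 0) (Suc l) * (2 * \<i>) ^ l"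
    from trace[of l, unfolded f jRe_hser_trace, folded z_def] assms(1) have "Re z = 0"
      by (simp del: of_nat_Suc)
    moreover have "Im z = 0" using origin[of "Suc l"] by (simp add: z_def mult_ac)
    ultimately have "z = 0" by (simp add: complex_eq_iff)
    then show ?thesis by (simp add: z_def k True)
  qed
  then have "hser n A a b l = (if a = (\<lambda>_. 0) \<and> b = (\<lambda>_. 0) \<and> l = 0 then A (\<lambda>_. 0) 0 else 0)"
    for a b l by (rule hser_eq_const)
  with origin[of 0] show "f = jzero" by (auto simp: f jRe_def jzero_def fun_eq_iff complex_add_cnj)
qed

text \<open>The real parts of the \<open>\<alpha> = 0\<close> coefficients reproduce the \<open>v\<^sup>k\<close> coefficients of \<open>f\<close>, the
  imaginary parts its traces.\<close>

definition match_coeffs :: "nat \<Rightarrow> jet \<Rightarrow> (nat \<Rightarrow> nat) \<Rightarrow> nat \<Rightarrow> complex" where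
  "match_coeffs n f \<alpha> k = (if \<alpha> = (\<lambda>_. 0)
     then Complex (Re (f (\<lambda>_. 0) (\<lambda>_. 0) k))
       (2 * (\<Sum>j<n - 1. Re (f (unitidx j) (unitidx j) (k - 1))) / (real (n - 1) * real k))
     else 2 * f \<alpha> (\<lambda>_. 0) k) / (2 * \<i>) ^ k"

lemma jRe_hser_match_coeffs_pure:
  assumes "f \<in> JE n"
  shows "jRe (hser n (match_coeffs n f)) a (\<lambda>_. 0) l = f a (\<lambda>_. 0) l"
proof (cases "vidx n a")
  case False
  then have "jRe (hser n (match_coeffs n f)) a (\<lambda>_. 0) l = 0" "f a (\<lambda>_. 0) l = 0"
    using JE_vidx[OF jRe_hser_in_JE, of n _ a _ l] JE_vidx[OF assms, of a _ l] by blast+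
  then show ?thesis by simp
next
  case True
  show ?thesis
  proof (cases "a = (\<lambda>_. 0)")
    case True
    then show ?thesis
      using JE_diag_real[OF assms] by (simp add: jRe_hser_origin_coeff match_coeffs_def)
  next
    case False
    with \<open>vidx n a\<close> show ?thesis by (simp add: jRe_hser_holo_coeff match_coeffs_def)
  qed
qed

lemma jRe_hser_match_coeffs_trace:
  assumes "2 \<le> n" "f \<in> JE n"
  shows "(\<Sum>j<n - 1. jRe (hser n (match_coeffs n f)) (unitidx j) (unitidx j) l)
    = (\<Sum>j<n - 1. f (unitidx j) (unitidx j) l)"
proof -
  define \<tau> where "\<tau> = (\<Sum>j<n - 1. Re (f (unitidx j) (unitidx j) l))"
  have "Re (match_coeffs n f (\<lambda>_. 0) (Suc l) * (2 * \<i>) ^ l) = \<tau> / (real (n - 1) * real (Suc l))"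
    by (simp add: match_coeffs_def \<tau>_def Re_divide del: of_nat_Suc)
  then have "(\<Sum>j<n - 1. jRe (hser n (match_coeffs n f)) (unitidx j) (unitidx j) l)
      = of_nat (n - 1) * of_real (\<tau> / (real (n - 1) * real (Suc l)) * real (Suc l))"
    by (simp only: jRe_hser_trace)
  also have "\<dots> = of_real \<tau>"
    using assms(1) by (simp del: of_nat_Suc)
  also have "\<dots> = (\<Sum>j<n - 1. f (unitidx j) (unitidx j) l)"
    unfolding \<tau>_def of_real_sum using JE_diag_real[OF assms(2)] by simp
  finally show ?thesis .
qed

lemma ex_JP_diff_in_N0:
  assumes "2 \<le> n" "f \<in> JE n"
  shows "\<exists>h \<in> JP n. jadd f (jscale (-1) h) \<in> N0 n"
proof
  let ?h = "jRe (hser n (match_coeffs n f))"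
  show "?h \<in> JP n" by (auto simp: JP_def)
  have "jadd f (jscale (-1) ?h) \<in> JE n"
    using real_subspace_diff[OF JE_real_subspace assms(2) jRe_hser_in_JE] .
  then show "jadd f (jscale (-1) ?h) \<in> N0 n"
    using jRe_hser_match_coeffs_pure[OF assms(2)] jRe_hser_match_coeffs_trace[OF assms]
    by (simp add: N0_iff jadd_def jscale_def sum_subtractf)
qed

theorem mainTheorem9:
  fixes n :: nat
  assumes "2 \<le> n"
  shows "real_subspace (JE n) \<and> real_subspace (N0 n) \<and> real_subspace (JP n)
         \<and> N0 n \<subseteq> JE n \<and> JP n \<subseteq> JE n
         \<and> (\<forall>f\<in>JE n. \<exists>!gh. fst gh \<in> N0 n \<and> snd gh \<in> JP n \<and> f = jadd (fst gh) (snd gh))"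
proof (intro conjI ballI)
  show "real_subspace (JE n)" "real_subspace (N0 n)" "real_subspace (JP n)"
    by (fact JE_real_subspace N0_real_subspace JP_real_subspace)+
  show "N0 n \<subseteq> JE n" by (auto simp: N0_iff)
  show "JP n \<subseteq> JE n" using jRe_hser_in_JE by (auto simp: JP_def)
next
  fix f assume "f \<in> JE n"
  with assms obtain h where h: "h \<in> JP n" "jadd f (jscale (-1) h) \<in> N0 n"
    using ex_JP_diff_in_N0 by blast
  let ?g = "jadd f (jscale (-1) h)"
  have f: "f = jadd ?g h" by (simp add: jadd_def jscale_def)
  have "fst gh = ?g \<and> snd gh = h"
    if "fst gh \<in> N0 n \<and> snd gh \<in> JP n \<and> f = jadd (fst gh) (snd gh)" for gh
    using that h f
    by (intro real_subspace_decomposition_unique[OF N0_real_subspace JP_real_subspace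
          N0_inter_JP[OF assms]]) auto
  then show "\<exists>!gh. fst gh \<in> N0 n \<and> snd gh \<in> JP n \<and> f = jadd (fst gh) (snd gh)"
    using h f by (intro ex1I[of _ "(?g, h)"]) (simp, metis prod.collapse)
qed

end
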